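(* Let $X$ be a random vector and $\epsilon$ a random variable, independent, and let $Y=h(X)+\epsilon$ for a Borel function $h$, where $\epsilon$ has a density with respect to Lebesgue measure on $\mathbb{R}$ and $X$ has a density with respect to a $\sigma$-finite Borel measure. Let $u_{h(X)}=\sup\{u: F_{h(X)}(u)<1\}$ and suppose the CDF of $h(X)$ is continuous on the interval $(u,u_{h(X)}]$ for some $u<u_{h(X)}$. Then \[ \lambda^{(\mathrm{opt})}(Y,X)=\limsup_{p\uparrow1}\mathbb{P}\big[Y>F_Y^{\leftarrow}(p)\,\big|\,h(X)>F_{h(X)}^{\leftarrow}(p)\big], \] so $h(X)$ is an optimal extremal predictor for the extreme events of $Y$. In particular, if the tail dependence coefficient $\lambda(Y,h(X))$ exists, then $\lambda^{(\mathrm{opt})}(Y,X)=\lambda(Y,h(X))$.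
   Context: $F_\xi$ is the CDF of $\xi$ and $F_\xi^{\leftarrow}(p)=\inf\{y:F_\xi(y)\ge p\}$. For $p\in(0,1)$, $\mathcal{C}_p(X)$ is the class of Borel functions $g$ with $\mathbb{P}[g(X)>F_{g(X)}^{\leftarrow}(p)]=1-p$. The optimal extremal precision is \[ \lambda^{(\mathrm{opt})}(Y,X)=\limsup_{p\uparrow1}\sup_{g\in\mathcal{C}_p(X)}\mathbb{P}\big(Y>F_Y^{\leftarrow}(p)\mid g(X)>F_{g(X)}^{\leftarrow}(p)\big). \] A random variable $h(X)$ is an optimal extremal predictor if $\lambda^{(\mathrm{opt})}(Y,X)=\limsup_{p\uparrow1}\mathbb{P}(Y>F_Y^{\leftarrow}(p)\mid h(X)>F_{h(X)}^{\leftarrow}(p))$. The tail dependence coefficient is $\lambda(\xi,\eta)=\lim_{p\uparrow1}\mathbb{P}[\xi>F_\xi^{\leftarrow}(p)\mid \eta>F_\eta^{\leftarrow}(p)]$ when the limit exists. *)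

theory Defs
  imports "HOL-Probability.Probability"
begin

definition rv_cdf :: "'a measure \<Rightarrow> ('a \<Rightarrow> real) \<Rightarrow> real \<Rightarrow> real" where
  "rv_cdf M xi y = measure M {w \<in> space M. xi w \<le> y}"

definition quantile :: "'a measure \<Rightarrow> ('a \<Rightarrow> real) \<Rightarrow> real \<Rightarrow> real" where
  "quantile M xi p = Inf {y. rv_cdf M xi y \<ge> p}"

definition exceed :: "'a measure \<Rightarrow> ('a \<Rightarrow> real) \<Rightarrow> real \<Rightarrow> 'a set" where
  "exceed M xi p = {w \<in> space M. xi w > quantile M xi p}"

definition cond_exceed :: "'a measure \<Rightarrow> ('a \<Rightarrow> real) \<Rightarrow> ('a \<Rightarrow> real) \<Rightarrow> real \<Rightarrow> real" where
  "cond_exceed M Y eta p =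
     measure M (exceed M Y p \<inter> exceed M eta p) / measure M (exceed M eta p)"

definition class_C :: "'a measure \<Rightarrow> ('a \<Rightarrow> 'b::euclidean_space) \<Rightarrow> real \<Rightarrow> ('b \<Rightarrow> real) set" where
  "class_C M X p = {g. g \<in> borel_measurable borel \<and>
                        measure M (exceed M (\<lambda>w. g (X w)) p) = 1 - p}"

definition lambda_opt :: "'a measure \<Rightarrow> ('a \<Rightarrow> real) \<Rightarrow> ('a \<Rightarrow> 'b::euclidean_space) \<Rightarrow> ereal" where
  "lambda_opt M Y X =
     Limsup (at_left 1) (\<lambda>p. SUP g \<in> class_C M X p. ereal (cond_exceed M Y (\<lambda>w. g (X w)) p))"

definition right_endpoint :: "'a measure \<Rightarrow> ('a \<Rightarrow> real) \<Rightarrow> ereal" where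
  "right_endpoint M xi = (SUP u \<in> {u. rv_cdf M xi u < 1}. ereal u)"

end

theory Submission
  imports Defs
begin

text \<open>
  Conditioning on the exceedance of a predictor \<open>g(X)\<close> in \<open>C\<^sub>p(X)\<close> is conditioning on
  \<open>X \<in> A\<close> for a Borel set \<open>A\<close> of probability \<open>1 - p\<close>. Let \<open>q\<close> be the \<open>p\<close>-quantile of \<open>h(X)\<close>
  and \<open>B = {h > q}\<close>. If also \<open>P(X \<in> B) = 1 - p\<close>, then \<open>A - B\<close> and \<open>B - A\<close> are equally likely
  for \<open>X\<close>; on \<open>A - B\<close> the event \<open>Y > t\<close> forces \<open>\<epsilon> > t - q\<close>, while on \<open>B - A\<close> the event
  \<open>\<epsilon> > t - q\<close> forces \<open>Y > t\<close>. By independence \<open>\<epsilon> > t - q\<close> has the same probability on both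
  parts, so replacing \<open>A\<close> by \<open>B\<close> can only increase \<open>P(Y > t, X \<in> A)\<close>: \<open>h(X)\<close> has the
  largest precision in \<open>C\<^sub>p(X)\<close> whenever \<open>h \<in> C\<^sub>p(X)\<close>. Continuity of the cdf of \<open>h(X)\<close> below
  its right endpoint gives \<open>h \<in> C\<^sub>p(X)\<close> for all \<open>p\<close> close to 1.
\<close>

lemma (in finite_measure) finite_measure_diff_eq_Diff:
  assumes "A \<in> sets M" "B \<in> sets M"
  shows "measure M A - measure M B = measure M (A - B) - measure M (B - A)"
  using assms by (simp add: finite_measure_Diff' Int_commute)

lemma (in prob_space) rv_cdf_eq_cdf_distr:
  assumes "Z \<in> borel_measurable M"
  shows "rv_cdf M Z = cdf (distr M borel Z)"
proof
  fix y
  have "Z -` {..y} \<inter> space M = {w \<in> space M. Z w \<le> y}" by auto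
  then show "rv_cdf M Z y = cdf (distr M borel Z) y"
    using assms by (simp add: rv_cdf_def cdf_def measure_distr)
qed

lemma (in prob_space) rv_cdf_mono:
  assumes "Z \<in> borel_measurable M" "x \<le> y"
  shows "rv_cdf M Z x \<le> rv_cdf M Z y"
proof -
  have "{w \<in> space M. Z w \<le> y} \<in> events"
    using assms(1) by measurable
  then show ?thesis
    unfolding rv_cdf_def using assms(2) by (intro finite_measure_mono) auto
qed

lemma (in prob_space) quantile_le_iff:
  assumes Z: "Z \<in> borel_measurable M" and p: "0 < p" "p < 1"
  shows "quantile M Z p \<le> x \<longleftrightarrow> p \<le> rv_cdf M Z x"
proof -
  have "cdf_distribution (distr M borel Z)"
    unfolding cdf_distribution_def using Z by (rule real_distribution_distr)
  then interpret D: cdf_distribution "distr M borel Z" .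
  show ?thesis
    unfolding quantile_def rv_cdf_eq_cdf_distr[OF Z] using D.pseudoinverse[OF p, of x] by (rule sym)
qed

lemma (in prob_space) prob_exceed:
  assumes "Z \<in> borel_measurable M"
  shows "prob (exceed M Z p) = 1 - rv_cdf M Z (quantile M Z p)"
proof -
  have "exceed M Z p = space M - {w \<in> space M. Z w \<le> quantile M Z p}"
    by (auto simp: exceed_def)
  moreover have "{w \<in> space M. Z w \<le> quantile M Z p} \<in> events"
    using assms by measurable
  ultimately show ?thesis by (simp add: rv_cdf_def prob_compl)
qed

lemma (in prob_space) rv_cdf_quantile_eq:
  assumes Z: "Z \<in> borel_measurable M" and p: "0 < p" "p < 1"
    and cont: "isCont (rv_cdf M Z) (quantile M Z p)"
  shows "rv_cdf M Z (quantile M Z p) = p"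
proof (rule antisym)
  let ?F = "rv_cdf M Z" and ?q = "quantile M Z p"
  have below: "?F y < p" if "y < ?q" for y
    using that quantile_le_iff[OF Z p, of y] by simp
  have "(?F \<longlongrightarrow> ?F ?q) (at_left ?q)"
    using cont by (simp add: isCont_def filterlim_at_split)
  moreover from below have "\<forall>\<^sub>F y in at_left ?q. ?F y \<le> p"
    by (intro eventually_at_leftI[of "?q - 1"]) (auto intro: less_imp_le)
  ultimately show "?F ?q \<le> p" by (rule tendsto_upperbound) simp
  show "p \<le> ?F ?q"
    by (simp add: quantile_le_iff[OF Z p, symmetric])
qed

lemma (in prob_space) quantile_le_right_endpoint:
  assumes Z: "Z \<in> borel_measurable M" and p: "0 < p" "p < 1"
  shows "ereal (quantile M Z p) \<le> right_endpoint M Z"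
proof (rule dense_le)
  fix x assume x: "x < ereal (quantile M Z p)"
  have "ereal y \<le> right_endpoint M Z" if "y < quantile M Z p" for y
  proof -
    have "rv_cdf M Z y < 1"
      using that p quantile_le_iff[OF Z p, of y] by simp
    then show ?thesis unfolding right_endpoint_def by (auto intro: SUP_upper)
  qed
  with x show "x \<le> right_endpoint M Z" by (cases x) auto
qed

lemma (in prob_space) eventually_prob_exceed_eq:
  assumes Z: "Z \<in> borel_measurable M"
    and cont: "\<exists>u. ereal u < right_endpoint M Z \<and>
                 (\<forall>x. ereal u < ereal x \<and> ereal x \<le> right_endpoint M Z
                      \<longrightarrow> isCont (rv_cdf M Z) x)"
  shows "\<forall>\<^sub>F p in at_left 1. prob (exceed M Z p) = 1 - p"
proof -
  obtain u where u: "ereal u < right_endpoint M Z"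
    and u_cont: "\<And>x. ereal u < ereal x \<Longrightarrow> ereal x \<le> right_endpoint M Z \<Longrightarrow> isCont (rv_cdf M Z) x"
    using cont by blast
  obtain v where "rv_cdf M Z v < 1" "u < v"
    using u unfolding right_endpoint_def less_SUP_iff by auto
  then have "rv_cdf M Z u < 1"
    using rv_cdf_mono[OF Z, of u v] by simp
  then have "\<forall>\<^sub>F p in at_left 1. p \<in> {rv_cdf M Z u<..<1}"
    by (rule eventually_at_left_real)
  then show ?thesis
  proof (rule eventually_mono)
    fix p assume "p \<in> {rv_cdf M Z u<..<1}"
    then have p: "0 < p" "p < 1" and "rv_cdf M Z u < p"
      by (auto simp: rv_cdf_def intro: le_less_trans[OF measure_nonneg])
    then have "u < quantile M Z p"
      using quantile_le_iff[OF Z p, of u] by simp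
    then have "isCont (rv_cdf M Z) (quantile M Z p)"
      by (intro u_cont quantile_le_right_endpoint[OF Z p]) simp
    then show "prob (exceed M Z p) = 1 - p"
      by (simp add: prob_exceed[OF Z] rv_cdf_quantile_eq[OF Z p])
  qed
qed

locale additive_noise_model = prob_space M
  for M :: "'a measure" and X :: "'a \<Rightarrow> 'b::euclidean_space" and eps :: "'a \<Rightarrow> real"
    and h :: "'b \<Rightarrow> real" and Y :: "'a \<Rightarrow> real" +
  assumes X_rv: "X \<in> borel_measurable M"
    and eps_rv: "eps \<in> borel_measurable M"
    and indep: "\<forall>A \<in> sets (borel :: 'b measure). \<forall>B \<in> sets (borel :: real measure).
                 measure M ({w \<in> space M. X w \<in> A} \<inter> {w \<in> space M. eps w \<in> B})
                   = measure M {w \<in> space M. X w \<in> A} * measure M {w \<in> space M. eps w \<in> B}"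
    and h_borel: "h \<in> borel_measurable borel"
    and Y_def: "\<And>w. w \<in> space M \<Longrightarrow> Y w = h (X w) + eps w"
begin

lemma hX_rv: "(\<lambda>w. h (X w)) \<in> borel_measurable M"
  using X_rv h_borel by measurable

lemma Y_rv: "Y \<in> borel_measurable M"
proof -
  have "(\<lambda>w. h (X w) + eps w) \<in> borel_measurable M"
    using hX_rv eps_rv by measurable
  then show ?thesis
    using measurable_cong[of M Y "\<lambda>w. h (X w) + eps w" borel] Y_def by blast
qed

lemma prob_exceed_Int_le_superlevel:
  assumes A: "A \<in> sets borel"
    and same_prob: "prob {w \<in> space M. X w \<in> A} = prob {w \<in> space M. q < h (X w)}"
  shows "prob ({w \<in> space M. t < Y w} \<inter> {w \<in> space M. X w \<in> A})
       \<le> prob ({w \<in> space M. t < Y w} \<inter> {w \<in> space M. q < h (X w)})"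
proof -
  define X_in where "X_in S = {w \<in> space M. X w \<in> S}" for S
  define B where "B = {x. q < h x}"
  define E where "E = {w \<in> space M. t < Y w}"
  define N where "N = {w \<in> space M. eps w \<in> {t - q<..}}"
  have B: "B \<in> sets borel"
    unfolding B_def using h_borel by measurable
  have X_in_B: "X_in B = {w \<in> space M. q < h (X w)}"
    by (simp add: X_in_def B_def)
  have X_in_sets: "X_in S \<in> events" if "S \<in> sets borel" for S
    unfolding X_in_def using X_rv that by measurable
  have E: "E \<in> events"
    unfolding E_def using Y_rv by measurable
  have N: "N \<in> events"
    unfolding N_def using eps_rv by measurable
  have X_in_Diff: "X_in S - X_in T = X_in (S - T)" for S T
    by (auto simp: X_in_def)
  have indep_N: "prob (X_in S \<inter> N) = prob (X_in S) * prob N" if "S \<in> sets borel" for S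
    unfolding X_in_def N_def using indep[rule_format, OF that, of "{t - q<..}"] by simp
  have "prob (X_in A) = prob (X_in B)"
    using same_prob by (simp add: X_in_B) (simp add: X_in_def)
  then have equal_parts: "prob (X_in (A - B)) = prob (X_in (B - A))"
    using finite_measure_diff_eq_Diff[OF X_in_sets[OF A] X_in_sets[OF B]] by (simp add: X_in_Diff)
  have "prob (E \<inter> X_in (A - B)) \<le> prob (X_in (A - B) \<inter> N)"
    using N X_in_sets[of "A - B"] A B
    by (intro finite_measure_mono) (auto simp: E_def X_in_def N_def B_def Y_def)
  also have "\<dots> = prob (X_in (B - A) \<inter> N)"
    using A B equal_parts by (simp add: indep_N)
  also have "\<dots> \<le> prob (E \<inter> X_in (B - A))"
    using E X_in_sets[of "B - A"] A B
    by (intro finite_measure_mono) (auto simp: E_def X_in_def N_def B_def Y_def)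
  finally have "prob (E \<inter> X_in (A - B)) \<le> prob (E \<inter> X_in (B - A))" .
  moreover have "prob (E \<inter> X_in A) - prob (E \<inter> X_in B)
      = prob (E \<inter> X_in (A - B)) - prob (E \<inter> X_in (B - A))"
    using finite_measure_diff_eq_Diff[of "E \<inter> X_in A" "E \<inter> X_in B"] E X_in_sets A B
    by (simp add: Diff_Int_distrib[symmetric] X_in_Diff)
  ultimately show ?thesis
    unfolding E_def X_in_B[symmetric] X_in_def by linarith
qed

lemma cond_exceed_le:
  assumes g: "g \<in> borel_measurable borel"
    and same_prob: "prob (exceed M (\<lambda>w. g (X w)) p) = prob (exceed M (\<lambda>w. h (X w)) p)"
  shows "cond_exceed M Y (\<lambda>w. g (X w)) p \<le> cond_exceed M Y (\<lambda>w. h (X w)) p"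
proof -
  define A where "A = {x. quantile M (\<lambda>w. g (X w)) p < g x}"
  have A: "A \<in> sets borel"
    unfolding A_def using g by measurable
  have exceed_g: "exceed M (\<lambda>w. g (X w)) p = {w \<in> space M. X w \<in> A}"
    by (simp add: exceed_def A_def)
  have "prob (exceed M Y p \<inter> exceed M (\<lambda>w. g (X w)) p)
      \<le> prob (exceed M Y p \<inter> exceed M (\<lambda>w. h (X w)) p)"
    unfolding exceed_g
  proof (unfold exceed_def, rule prob_exceed_Int_le_superlevel[OF A])
    show "prob {w \<in> space M. X w \<in> A} = prob {w \<in> space M. quantile M (\<lambda>w. h (X w)) p < h (X w)}"
      using same_prob unfolding exceed_g by (simp add: exceed_def)
  qed
  then show ?thesis
    unfolding cond_exceed_def same_prob by (rule divide_right_mono) simp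
qed

lemma SUP_class_C_cond_exceed:
  assumes "h \<in> class_C M X p"
  shows "(SUP g \<in> class_C M X p. ereal (cond_exceed M Y (\<lambda>w. g (X w)) p))
       = ereal (cond_exceed M Y (\<lambda>w. h (X w)) p)"
proof (rule antisym)
  show "(SUP g \<in> class_C M X p. ereal (cond_exceed M Y (\<lambda>w. g (X w)) p))
      \<le> ereal (cond_exceed M Y (\<lambda>w. h (X w)) p)"
    using assms by (intro SUP_least) (auto simp: class_C_def intro: cond_exceed_le)
  show "ereal (cond_exceed M Y (\<lambda>w. h (X w)) p)
      \<le> (SUP g \<in> class_C M X p. ereal (cond_exceed M Y (\<lambda>w. g (X w)) p))"
    using assms by (rule SUP_upper)
qed

lemma lambda_opt_eq_Limsup:
  assumes "\<forall>\<^sub>F p in at_left 1. prob (exceed M (\<lambda>w. h (X w)) p) = 1 - p"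
  shows "lambda_opt M Y X = Limsup (at_left 1) (\<lambda>p. ereal (cond_exceed M Y (\<lambda>w. h (X w)) p))"
  unfolding lambda_opt_def
proof (rule Limsup_eq)
  show "\<forall>\<^sub>F p in at_left 1. (SUP g \<in> class_C M X p. ereal (cond_exceed M Y (\<lambda>w. g (X w)) p))
      = ereal (cond_exceed M Y (\<lambda>w. h (X w)) p)"
    using assms
    by (rule eventually_mono) (intro SUP_class_C_cond_exceed, simp add: class_C_def h_borel)
qed

end

theorem theorem3:
  fixes M :: "'a measure"
    and X :: "'a \<Rightarrow> 'b::euclidean_space"
    and eps :: "'a \<Rightarrow> real"
    and h :: "'b \<Rightarrow> real"
    and Y :: "'a \<Rightarrow> real"
  assumes P: "prob_space M"
    and X_rv: "X \<in> borel_measurable M"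
    and eps_rv: "eps \<in> borel_measurable M"
    and indep: "\<forall>A \<in> sets (borel :: 'b measure). \<forall>B \<in> sets (borel :: real measure).
                 measure M ({w \<in> space M. X w \<in> A} \<inter> {w \<in> space M. eps w \<in> B})
                   = measure M {w \<in> space M. X w \<in> A} * measure M {w \<in> space M. eps w \<in> B}"
    and h_borel: "h \<in> borel_measurable borel"
    and Y_def: "\<And>w. w \<in> space M \<Longrightarrow> Y w = h (X w) + eps w"
    and eps_density: "\<exists>f. distributed M lborel eps f"
    and X_density: "\<exists>(\<nu> :: 'b measure) f. sigma_finite_measure \<nu> \<and> sets \<nu> = sets borel
                      \<and> distributed M \<nu> X f"
    and cont: "\<exists>u. ereal u < right_endpoint M (\<lambda>w. h (X w)) \<and>
                 (\<forall>x. ereal u < ereal x \<and> ereal x \<le> right_endpoint M (\<lambda>w. h (X w))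
                      \<longrightarrow> isCont (rv_cdf M (\<lambda>w. h (X w))) x)"
  shows "lambda_opt M Y X
           = Limsup (at_left 1) (\<lambda>p. ereal (cond_exceed M Y (\<lambda>w. h (X w)) p))
         \<and> (\<forall>L. ((\<lambda>p. cond_exceed M Y (\<lambda>w. h (X w)) p) \<longlongrightarrow> L) (at_left 1)
                \<longrightarrow> lambda_opt M Y X = ereal L)"
proof -
  interpret additive_noise_model M X eps h Y
    using P X_rv eps_rv indep h_borel Y_def
    by (simp add: additive_noise_model_def additive_noise_model_axioms_def)
  have opt: "lambda_opt M Y X = Limsup (at_left 1) (\<lambda>p. ereal (cond_exceed M Y (\<lambda>w. h (X w)) p))"
    by (intro lambda_opt_eq_Limsup eventually_prob_exceed_eq hX_rv cont)
  moreover have "lambda_opt M Y X = ereal L"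
    if "((\<lambda>p. cond_exceed M Y (\<lambda>w. h (X w)) p) \<longlongrightarrow> L) (at_left 1)" for L
    unfolding opt using that by (intro lim_imp_Limsup tendsto_ereal) simp_all
  ultimately show ?thesis by blast
qed

end
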